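(* There is an absolute constant $C>0$ such that the following holds. Let $\varepsilon\in(0,1)$, let $f:\mathbb R\to\mathbb R$ be $1$-smooth with $f\ge0$, and let $x_0\in\mathbb R$ satisfy $f(x_0)\le1$ and $f'(x_0)\le-\varepsilon$. Then DecreaseGap$(x_0)$ terminates using at most $C(1+\log(1/\varepsilon))$ oracle queries, and either it returns ("stationary", $z$) where $z$ is an $\varepsilon$-stationary point of $f$, or it returns ("base", $x$) where $f(x)\le f(x_0)$, $f'(x)\le-\varepsilon$ and $f(x+2/\varepsilon)\ge\frac34 f(x)$.
   Context: $f:\mathbb R\to\mathbb R$ is $1$-smooth if it is continuously differentiable and $f'$ is $1$-Lipschitz; $x$ is an $\varepsilon$-stationary point if $|f'(x)|<\varepsilon$. The oracle returns $(f(x),f'(x))$ on query $x$; values at already-queried points are reused. Subroutines (a recursive call's output is returned unchanged): BinarySearch$(x_0,x_1)$: $m=(x_0+x_1)/2$; if $|f'(m)|<\varepsilon$ return $m$; if $f'(m)\le-\varepsilon$ return BinarySearch$(m,x_1)$; if $f'(m)>0$ return BinarySearch$(x_0,m)$. DecreaseGap$(x_0)$: let $y=x_0+2/\varepsilon$; if $|f'(y)|<\varepsilon$ return ("stationary", $y$); else if $f'(y)>0$ return ("stationary", BinarySearch$(x_0,y)$); else if $f(y)\ge\frac34 f(x_0)$ return ("base", $x_0$); else return DecreaseGap$(y)$. *)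

theory Defs
  imports Complex_Main
begin

text \<open>The oracle for f returns (f x, f' x); the algorithms are parameterised by
  f and its derivative f'. Each run returns its output together with the SET of
  distinct points at which the oracle was queried (queries at already-queried
  points are reused, so the number of oracle queries is the cardinality of
  this set). Recursion is run with a fuel bound n; None means the fuel was
  exhausted, so termination means: Some result for some fuel.\<close>

datatype dg_result = Stationary real | Base real

fun bsearch :: "(real \<Rightarrow> real) \<Rightarrow> real \<Rightarrow> nat \<Rightarrow> real \<Rightarrow> real
                  \<Rightarrow> (real \<times> real set) option" where
  "bsearch f' eps 0 a b = None"
| "bsearch f' eps (Suc n) a b =
     (let m = (a + b) / 2 in
      if \<bar>f' m\<bar> < eps then Some (m, {m})
      else if f' m \<le> - eps then
        map_option (\<lambda>(z, Q). (z, insert m Q)) (bsearch f' eps n m b)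
      else if f' m > 0 then
        map_option (\<lambda>(z, Q). (z, insert m Q)) (bsearch f' eps n a m)
      else None)"

fun dgap :: "(real \<Rightarrow> real) \<Rightarrow> (real \<Rightarrow> real) \<Rightarrow> real \<Rightarrow> nat \<Rightarrow> real
               \<Rightarrow> (dg_result \<times> real set) option" where
  "dgap f f' eps 0 x = None"
| "dgap f f' eps (Suc n) x =
     (let y = x + 2 / eps in
      if \<bar>f' y\<bar> < eps then Some (Stationary y, {x, y})
      else if f' y > 0 then
        map_option (\<lambda>(z, Q). (Stationary z, {x, y} \<union> Q)) (bsearch f' eps n x y)
      else if f y \<ge> 3 / 4 * f x then Some (Base x, {x, y})
      else map_option (\<lambda>(r, Q). (r, insert x Q)) (dgap f f' eps n y))"

end

theory Submission
  imports Defs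
begin

text \<open>A nonnegative 1-smooth function satisfies \<open>f' x\<^sup>2 / 4 \<le> f x\<close>, so \<open>f \<ge> \<epsilon>\<^sup>2/4\<close>
  wherever \<open>f' \<le> -\<epsilon>\<close>. DecreaseGap recurses only from such points, and only after
  \<open>f\<close> has dropped by a factor \<open>3/4\<close>; starting from \<open>f x\<^sub>0 \<le> 1\<close> this happens
  \<open>O(log (1/\<epsilon>))\<close> times. When a probe \<open>y\<close> has \<open>f' y \<ge> \<epsilon>\<close>, bisection on the
  interval of length \<open>2/\<epsilon>\<close> keeps \<open>f' \<le> -\<epsilon>\<close> at the left end and \<open>f' \<ge> \<epsilon>\<close> at the right
  one; as \<open>f'\<close> is 1-Lipschitz such an interval is never shorter than \<open>2\<epsilon>\<close>, so a
  midpoint is \<open>\<epsilon>\<close>-stationary after \<open>O(log (1/\<epsilon>))\<close> halvings.\<close>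

definition one_smooth :: "(real \<Rightarrow> real) \<Rightarrow> (real \<Rightarrow> real) \<Rightarrow> bool" where
  "one_smooth f f' \<longleftrightarrow>
     (\<forall>x. (f has_real_derivative f' x) (at x)) \<and> (\<forall>x y. \<bar>f' x - f' y\<bar> \<le> \<bar>x - y\<bar>)"

lemma one_smoothD:
  assumes "one_smooth f f'"
  shows "(f has_real_derivative f' x) (at x)" and "\<bar>f' x - f' y\<bar> \<le> \<bar>x - y\<bar>"
  using assms by (auto simp: one_smooth_def)

lemma mean_value_between:
  fixes f f' :: "real \<Rightarrow> real"
  assumes "\<And>x. (f has_real_derivative f' x) (at x)" and "x \<noteq> y"
  shows "\<exists>z. \<bar>z - x\<bar> < \<bar>y - x\<bar> \<and> f y - f x = (y - x) * f' z"
proof (cases "x < y")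
  case True
  then obtain z where "x < z" "z < y" "f y - f x = (y - x) * f' z"
    using MVT2[of x y f f'] assms(1) by blast
  then show ?thesis by (intro exI[of _ z]) auto
next
  case False
  then have "y < x" using assms(2) by simp
  then obtain z where "y < z" "z < x" "f x - f y = (x - y) * f' z"
    using MVT2[of y x f f'] assms(1) by blast
  then show ?thesis by (intro exI[of _ z]) (auto simp: algebra_simps)
qed

lemma one_smooth_upper_bound:
  assumes smooth: "one_smooth f f'"
  shows "f y \<le> f x + (y - x) * f' x + (y - x)^2"
proof (cases "x = y")
  case False
  then obtain z where z: "\<bar>z - x\<bar> < \<bar>y - x\<bar>" "f y - f x = (y - x) * f' z"
    using mean_value_between[OF one_smoothD(1)[OF smooth]] by blast
  have "(y - x) * (f' z - f' x) \<le> \<bar>y - x\<bar> * \<bar>f' z - f' x\<bar>"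
    by (metis abs_ge_self abs_mult)
  also have "\<dots> \<le> \<bar>y - x\<bar> * \<bar>y - x\<bar>"
    using one_smoothD(2)[OF smooth, of z x] z(1) by (intro mult_left_mono) auto
  finally show ?thesis using z(2) by (simp add: algebra_simps power2_eq_square)
qed simp

lemma nonneg_one_smooth_deriv_bound:
  assumes smooth: "one_smooth f f'" and nonneg: "\<forall>x. f x \<ge> 0"
  shows "(f' x)^2 / 4 \<le> f x"
proof -
  have "0 \<le> f (x - f' x / 2)" using nonneg by blast
  also have "\<dots> \<le> f x - (f' x)^2 / 4"
    using one_smooth_upper_bound[OF smooth, of "x - f' x / 2" x]
    by (simp add: power2_eq_square)
  finally show ?thesis by simp
qed

lemma deriv_gap_ge:
  fixes f' :: "real \<Rightarrow> real"
  assumes "\<And>x y. \<bar>f' x - f' y\<bar> \<le> \<bar>x - y\<bar>" "f' a \<le> - eps" "eps \<le> f' b"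
  shows "2 * eps \<le> \<bar>b - a\<bar>"
  using assms(1)[of b a] assms(2,3) by linarith

lemma bsearch_finds_stationary:
  fixes f' :: "real \<Rightarrow> real"
  assumes lip: "\<And>x y. \<bar>f' x - f' y\<bar> \<le> \<bar>x - y\<bar>"
  shows "a < b \<Longrightarrow> f' a \<le> - eps \<Longrightarrow> eps \<le> f' b \<Longrightarrow> b - a < 2 * eps * 2 ^ k \<Longrightarrow> k \<le> n \<Longrightarrow>
    \<exists>z Q. bsearch f' eps n a b = Some (z, Q) \<and> \<bar>f' z\<bar> < eps \<and> card Q \<le> k"
proof (induction n arbitrary: a b k)
  case 0
  then show ?case using deriv_gap_ge[OF lip, of a eps b] by simp
next
  case (Suc n)
  have "k \<noteq> 0" using Suc.prems deriv_gap_ge[OF lip, of a eps b] by (cases k) auto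
  then obtain j where k: "k = Suc j" by (cases k) auto
  define m where "m = (a + b) / 2"
  have "b - a < 2 * (2 * eps * 2 ^ j)" using Suc.prems(4) k by simp
  then have halves: "b - m < 2 * eps * 2 ^ j" "m - a < 2 * eps * 2 ^ j" "a < m" "m < b"
    using Suc.prems(1) by (auto simp: m_def field_simps)
  have step: "bsearch f' eps (Suc n) a b =
      (if \<bar>f' m\<bar> < eps then Some (m, {m})
       else if f' m \<le> - eps then map_option (\<lambda>(z, Q). (z, insert m Q)) (bsearch f' eps n m b)
       else map_option (\<lambda>(z, Q). (z, insert m Q)) (bsearch f' eps n a m))"
    by (auto simp: m_def Let_def)
  consider "\<bar>f' m\<bar> < eps" | "f' m \<le> - eps" | "eps \<le> f' m" by linarith
  then show ?case
  proof cases
    case 1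
    then show ?thesis unfolding step using k by simp
  next
    case 2
    then obtain z Q where "bsearch f' eps n m b = Some (z, Q)" "\<bar>f' z\<bar> < eps" "card Q \<le> j"
      using Suc.IH[of m b j] Suc.prems halves k by auto
    then show ?thesis unfolding step using 2 k by (auto intro: card_insert_le_m1)
  next
    case 3
    then obtain z Q where "bsearch f' eps n a m = Some (z, Q)" "\<bar>f' z\<bar> < eps" "card Q \<le> j"
      using Suc.IH[of a m j] Suc.prems halves k by auto
    then show ?thesis unfolding step using 3 k Suc.prems(2) by (auto intro: card_insert_le_m1)
  qed
qed

definition decrease_gap_correct ::
    "(real \<Rightarrow> real) \<Rightarrow> (real \<Rightarrow> real) \<Rightarrow> real \<Rightarrow> real \<Rightarrow> dg_result \<Rightarrow> bool" where
  "decrease_gap_correct f f' eps x0 r =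
     (case r of
        Stationary z \<Rightarrow> \<bar>f' z\<bar> < eps
      | Base x \<Rightarrow> f x \<le> f x0 \<and> f' x \<le> - eps \<and> f (x + 2 / eps) \<ge> 3 / 4 * f x)"

lemma decrease_gap_correct_mono:
  "decrease_gap_correct f f' eps y r \<Longrightarrow> f y \<le> f x \<Longrightarrow> decrease_gap_correct f f' eps x r"
  by (cases r) (auto simp: decrease_gap_correct_def)

lemma nonneg_one_smooth_ge_of_deriv_le:
  assumes smooth: "one_smooth f f'"
    and nonneg: "\<forall>x. f x \<ge> 0" and "0 \<le> eps" "f' x \<le> - eps"
  shows "eps^2 / 4 \<le> f x"
proof -
  have "eps^2 \<le> (f' x)^2" using assms(3,4) power_mono[of eps "- f' x" 2] by simp
  then show ?thesis using nonneg_one_smooth_deriv_bound[OF smooth nonneg, of x] by simp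
qed

lemma dgap_correct_within_budget:
  fixes f f' :: "real \<Rightarrow> real"
  assumes smooth: "one_smooth f f'"
    and nonneg: "\<forall>x. f x \<ge> 0" and eps: "0 < eps"
    and bisection_budget: "2 / eps < 2 * eps * 2 ^ K"
  shows "f' x \<le> - eps \<Longrightarrow> f x < eps^2 / 4 * (4/3) ^ k \<Longrightarrow> k + K \<le> n \<Longrightarrow>
    \<exists>r Q. dgap f f' eps n x = Some (r, Q) \<and> card Q \<le> k + K + 2 \<and>
          decrease_gap_correct f f' eps x r"
proof (induction k arbitrary: x n)
  \<comment> \<open>\<open>k\<close> bounds the remaining recursive calls: each divides \<open>f\<close> by \<open>4/3\<close>.\<close>
  case 0
  then show ?case using nonneg_one_smooth_ge_of_deriv_le[OF smooth nonneg, of eps x] eps by simp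
next
  case (Suc j)
  then obtain m where n: "n = Suc m" "j + K \<le> m" by (cases n) auto
  define y where "y = x + 2 / eps"
  have xy: "x < y" "y - x < 2 * eps * 2 ^ K" using eps bisection_budget by (auto simp: y_def)
  have step: "dgap f f' eps n x =
     (if \<bar>f' y\<bar> < eps then Some (Stationary y, {x, y})
      else if eps \<le> f' y then
        map_option (\<lambda>(z, Q). (Stationary z, {x, y} \<union> Q)) (bsearch f' eps m x y)
      else if f y \<ge> 3 / 4 * f x then Some (Base x, {x, y})
      else map_option (\<lambda>(r, Q). (r, insert x Q)) (dgap f f' eps m y))"
    using eps by (auto simp: n y_def Let_def)
  have card_xy: "card {x, y} \<le> 2" by (simp add: card_insert_if)
  consider "\<bar>f' y\<bar> < eps" | "eps \<le> f' y" | "f' y \<le> - eps" "f y \<ge> 3 / 4 * f x"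
    | "f' y \<le> - eps" "f y < 3 / 4 * f x" by linarith
  then show ?case
  proof cases
    case 1
    then show ?thesis unfolding step using card_xy by (simp add: decrease_gap_correct_def)
  next
    case 2
    then obtain z Q where "bsearch f' eps m x y = Some (z, Q)" "\<bar>f' z\<bar> < eps" "card Q \<le> K"
      using bsearch_finds_stationary[OF one_smoothD(2)[OF smooth] xy(1) Suc.prems(1) 2 xy(2), of m] n
      by auto
    moreover have "card ({x, y} \<union> Q) \<le> 2 + card Q"
      using card_Un_le[of "{x, y}" Q] card_xy by simp
    ultimately show ?thesis unfolding step using 2 eps by (simp add: decrease_gap_correct_def)
  next
    case 3
    then show ?thesis unfolding step using Suc.prems(1) eps card_xy
      by (simp add: decrease_gap_correct_def y_def)
  next
    case 4
    have "f y < eps^2 / 4 * (4/3) ^ j" using 4(2) Suc.prems(2) by simp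
    then obtain r Q where rQ: "dgap f f' eps m y = Some (r, Q)" "card Q \<le> j + K + 2"
        "decrease_gap_correct f f' eps y r"
      using Suc.IH[OF 4(1)] n by blast
    have "f y \<le> f x" using 4(2) nonneg[rule_format, of x] by linarith
    with rQ(3) have "decrease_gap_correct f f' eps x r" by (rule decrease_gap_correct_mono)
    moreover have "card (insert x Q) \<le> Suc j + K + 2" using rQ(2) by (intro card_insert_le_m1) auto
    ultimately show ?thesis unfolding step using 4 eps rQ(1) by auto
  qed
qed

lemma exists_pow2_ge:
  fixes t :: real
  assumes "1 \<le> t"
  shows "\<exists>N. t \<le> 2 ^ N \<and> real N \<le> 1 + log 2 t"
proof -
  define N where "N = nat \<lceil>log 2 t\<rceil>"
  have "0 \<le> log 2 t" using assms by simp
  then have N: "log 2 t \<le> real N" "real N \<le> 1 + log 2 t" unfolding N_def by linarith+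
  have "t = 2 powr log 2 t" using assms by simp
  also have "\<dots> \<le> 2 powr real N" using N(1) by simp
  also have "\<dots> = 2 ^ N" by (simp add: powr_realpow)
  finally show ?thesis using N(2) by blast
qed

lemma dgap_budgets_exist:
  fixes eps :: real
  assumes "0 < eps" "eps < 1"
  shows "\<exists>k K. 1 < eps^2 / 4 * (4/3)^k \<and> 2 / eps < 2 * eps * 2^K \<and>
           real (k + K + 2) \<le> 15 * (1 + ln (1 / eps))"
proof -
  obtain N where N: "1 / eps \<le> 2 ^ N" "real N \<le> 1 + log 2 (1 / eps)"
    using exists_pow2_ge[of "1 / eps"] assms by auto
  define u :: real where "u = 2 ^ N"
  have eps_u: "1 \<le> eps * u" using N(1) assms(1) by (simp add: u_def field_simps)
  \<comment> \<open>\<open>k = 5 (N + 1)\<close> works because \<open>(4/3)\<^sup>5 > 4\<close>.\<close>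
  have "(4::real) ^ Suc N < ((4/3) ^ 5) ^ Suc N"
    by (rule power_strict_mono) (auto simp: power_numeral_reduce)
  moreover have "(4::real) ^ Suc N = 4 * u^2"
    by (simp add: u_def power2_eq_square flip: power_mult_distrib)
  moreover have "((4/3) ^ 5) ^ Suc N = (4/3::real) ^ (5 * Suc N)"
    by (rule power_mult[symmetric])
  ultimately have "4 * u^2 < (4/3) ^ (5 * Suc N)" by simp
  then have "eps^2 / 4 * (4 * u^2) < eps^2 / 4 * (4/3) ^ (5 * Suc N)"
    using assms(1) by simp
  moreover have "1 \<le> eps^2 / 4 * (4 * u^2)"
    using eps_u by (simp add: power_mult_distrib[symmetric] one_le_power)
  ultimately have potential: "1 < eps^2 / 4 * (4/3) ^ (5 * Suc N)" by linarith
  have "2 / eps < 4 / eps" using assms(1) by (simp add: divide_strict_right_mono)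
  also have "\<dots> \<le> 4 / eps * (eps * u)^2"
    using eps_u assms(1) by (intro mult_le_cancel_left1[THEN iffD2]) (auto simp: one_le_power)
  also have "\<dots> = 2 * eps * 2 ^ (2 * N + 1)"
    using assms(1) by (simp add: u_def power_mult power2_eq_square field_simps)
  finally have bisection: "2 / eps < 2 * eps * 2 ^ (2 * N + 1)" .
  have "ln (2::real) \<ge> 1/2"
    using ln_le_minus_one[of "1/2::real"] by (simp add: ln_div)
  moreover have "0 \<le> ln (1 / eps)" using assms by simp
  ultimately have "log 2 (1 / eps) \<le> 2 * ln (1 / eps)"
    using mult_left_mono[of 1 "2 * ln 2" "ln (1 / eps)"] by (simp add: log_def divide_le_eq)
  then have "real (5 * Suc N + (2 * N + 1) + 2) \<le> 15 * (1 + ln (1 / eps))"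
    using N(2) \<open>0 \<le> ln (1 / eps)\<close> by simp
  with potential bisection show ?thesis by blast
qed

lemma dgap_query_bound:
  fixes f f' :: "real \<Rightarrow> real"
  assumes smooth: "one_smooth f f'"
    and nonneg: "\<forall>x. f x \<ge> 0" and eps: "0 < eps" "eps < 1"
    and x0: "f x0 \<le> 1" "f' x0 \<le> - eps"
  shows "\<exists>n r Q. dgap f f' eps n x0 = Some (r, Q) \<and> real (card Q) \<le> 15 * (1 + ln (1 / eps)) \<and>
           decrease_gap_correct f f' eps x0 r"
proof -
  obtain k K where kK: "1 < eps^2 / 4 * (4/3) ^ k" "2 / eps < 2 * eps * 2 ^ K"
      "real (k + K + 2) \<le> 15 * (1 + ln (1 / eps))"
    using dgap_budgets_exist[OF eps] by blast
  obtain r Q where "dgap f f' eps (k + K) x0 = Some (r, Q)" "card Q \<le> k + K + 2"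
      "decrease_gap_correct f f' eps x0 r"
    using dgap_correct_within_budget[OF smooth nonneg eps(1) kK(2) x0(2), of k "k + K"] x0(1) kK(1)
    by auto
  with kK(3) show ?thesis by (intro exI) (auto intro: order_trans)
qed

theorem lemmaA7:
  "\<exists>C > 0. \<forall>(eps::real) (f::real \<Rightarrow> real) (f'::real \<Rightarrow> real) (x0::real).
     0 < eps \<and> eps < 1 \<and>
     (\<forall>x. (f has_real_derivative f' x) (at x)) \<and>
     (\<forall>x y. \<bar>f' x - f' y\<bar> \<le> \<bar>x - y\<bar>) \<and>
     (\<forall>x. f x \<ge> 0) \<and> f x0 \<le> 1 \<and> f' x0 \<le> - eps
     \<longrightarrow> (\<exists>n r Q. dgap f f' eps n x0 = Some (r, Q) \<and>
            real (card Q) \<le> C * (1 + ln (1 / eps)) \<and>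
            (case r of
               Stationary z \<Rightarrow> \<bar>f' z\<bar> < eps
             | Base x \<Rightarrow> f x \<le> f x0 \<and> f' x \<le> - eps \<and>
                         f (x + 2 / eps) \<ge> 3 / 4 * f x))"
proof (intro exI[of _ "15::real"] conjI allI impI)
  fix eps :: real and f f' :: "real \<Rightarrow> real" and x0 :: real
  assume "0 < eps \<and> eps < 1 \<and>
     (\<forall>x. (f has_real_derivative f' x) (at x)) \<and>
     (\<forall>x y. \<bar>f' x - f' y\<bar> \<le> \<bar>x - y\<bar>) \<and>
     (\<forall>x. f x \<ge> 0) \<and> f x0 \<le> 1 \<and> f' x0 \<le> - eps"
  then show "\<exists>n r Q. dgap f f' eps n x0 = Some (r, Q) \<and>
            real (card Q) \<le> 15 * (1 + ln (1 / eps)) \<and>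
            (case r of
               Stationary z \<Rightarrow> \<bar>f' z\<bar> < eps
             | Base x \<Rightarrow> f x \<le> f x0 \<and> f' x \<le> - eps \<and>
                         f (x + 2 / eps) \<ge> 3 / 4 * f x)"
    using dgap_query_bound[of f f' eps x0] unfolding decrease_gap_correct_def one_smooth_def by blast
qed simp

end
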